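(* For $n\ge2$ and $c\ge1$, the abelianization of $UW_n(c)$ is isomorphic to $\mathbb{Z}^c\oplus\mathbb{Z}_2$.
   Context: $UV_n(c)$ ($n\ge2$, $c\ge1$) is the group with generators $\rho_i$ ($1\le i\le n-1$), $\sigma_{i,t}$ ($1\le i\le n-1$, $1\le t\le c$) and relations $\rho_i\rho_{i+1}\rho_i=\rho_{i+1}\rho_i\rho_{i+1}$ ($1\le i\le n-2$), $\rho_i\rho_j=\rho_j\rho_i$ ($|i-j|\ge2$), $\rho_i^2=1$, $\sigma_{i,t}\sigma_{j,\ell}=\sigma_{j,\ell}\sigma_{i,t}$ ($|i-j|\ge2$, $1\le t,\ell\le c$), $\sigma_{i,t}\rho_j=\rho_j\sigma_{i,t}$ ($|i-j|\ge2$), $\rho_i\rho_{i+1}\sigma_{i,t}=\sigma_{i+1,t}\rho_i\rho_{i+1}$ ($1\le i\le n-2$, $1\le t\le c$). The universal welded braid group $UW_n(c)$ is the quotient of $UV_n(c)$ by the additional (welded) relations $\rho_i\sigma_{i+1,t}\sigma_{i,t}=\sigma_{i+1,t}\sigma_{i,t}\rho_{i+1}$ for all $1\le i\le n-2$, $1\le t\le c$. *)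

theory Defs
  imports "HOL-Algebra.Algebra"
begin

text \<open>A letter (g, False) stands for the generator g, (g, True) for its inverse.
  Words are lists of letters.\<close>

type_synonym 'g word = "('g \<times> bool) list"

definition valid_word :: "'g set \<Rightarrow> 'g word \<Rightarrow> bool" where
  "valid_word S w \<longleftrightarrow> fst ` set w \<subseteq> S"

inductive pres_eq :: "'g set \<Rightarrow> ('g word \<times> 'g word) set \<Rightarrow> 'g word \<Rightarrow> 'g word \<Rightarrow> bool"
  for S R where
  refl: "valid_word S w \<Longrightarrow> pres_eq S R w w"
| sym: "pres_eq S R w w' \<Longrightarrow> pres_eq S R w' w"
| trans: "pres_eq S R w w' \<Longrightarrow> pres_eq S R w' w'' \<Longrightarrow> pres_eq S R w w''"
| cancel: "valid_word S u \<Longrightarrow> valid_word S v \<Longrightarrow> g \<in> S \<Longrightarrow>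
           pres_eq S R (u @ [(g, b), (g, \<not> b)] @ v) (u @ v)"
| rel: "(l, r) \<in> R \<Longrightarrow> valid_word S l \<Longrightarrow> valid_word S r \<Longrightarrow>
        valid_word S u \<Longrightarrow> valid_word S v \<Longrightarrow>
        pres_eq S R (u @ l @ v) (u @ r @ v)"

definition presented_group :: "'g set \<Rightarrow> ('g word \<times> 'g word) set \<Rightarrow> ('g word set) monoid" where
  "presented_group S R =
     \<lparr> carrier = {{w'. pres_eq S R w w'} | w. valid_word S w},
       monoid.mult = (\<lambda>A B. {w. \<exists>a\<in>A. \<exists>b\<in>B. pres_eq S R (a @ b) w}),
       one = {w. pres_eq S R [] w} \<rparr>"

datatype uw_gen = Rho nat | Sigma nat nat

definition uw_gens :: "nat \<Rightarrow> nat \<Rightarrow> uw_gen set" where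
  "uw_gens n c = {Rho i | i. 1 \<le> i \<and> i \<le> n - 1}
               \<union> {Sigma i t | i t. 1 \<le> i \<and> i \<le> n - 1 \<and> 1 \<le> t \<and> t \<le> c}"

definition rh :: "nat \<Rightarrow> (uw_gen \<times> bool)" where "rh i = (Rho i, False)"
definition sg :: "nat \<Rightarrow> nat \<Rightarrow> (uw_gen \<times> bool)" where "sg i t = (Sigma i t, False)"

definition uv_rels :: "nat \<Rightarrow> nat \<Rightarrow> (uw_gen word \<times> uw_gen word) set" where
  "uv_rels n c =
     {([rh i, rh (i+1), rh i], [rh (i+1), rh i, rh (i+1)]) | i. 1 \<le> i \<and> i \<le> n - 2}
   \<union> {([rh i, rh j], [rh j, rh i]) | i j. 1 \<le> i \<and> i \<le> n - 1 \<and> 1 \<le> j \<and> j \<le> n - 1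
                                    \<and> (i + 2 \<le> j \<or> j + 2 \<le> i)}
   \<union> {([rh i, rh i], []) | i. 1 \<le> i \<and> i \<le> n - 1}
   \<union> {([sg i t, sg j l], [sg j l, sg i t]) | i j t l. 1 \<le> i \<and> i \<le> n - 1 \<and> 1 \<le> j \<and> j \<le> n - 1
          \<and> (i + 2 \<le> j \<or> j + 2 \<le> i) \<and> 1 \<le> t \<and> t \<le> c \<and> 1 \<le> l \<and> l \<le> c}
   \<union> {([sg i t, rh j], [rh j, sg i t]) | i j t. 1 \<le> i \<and> i \<le> n - 1 \<and> 1 \<le> j \<and> j \<le> n - 1
          \<and> (i + 2 \<le> j \<or> j + 2 \<le> i) \<and> 1 \<le> t \<and> t \<le> c}
   \<union> {([rh i, rh (i+1), sg i t], [sg (i+1) t, rh i, rh (i+1)]) | i t.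
          1 \<le> i \<and> i \<le> n - 2 \<and> 1 \<le> t \<and> t \<le> c}"

definition welded_rels :: "nat \<Rightarrow> nat \<Rightarrow> (uw_gen word \<times> uw_gen word) set" where
  "welded_rels n c =
     {([rh i, sg (i+1) t, sg i t], [sg (i+1) t, sg i t, rh (i+1)]) | i t.
          1 \<le> i \<and> i \<le> n - 2 \<and> 1 \<le> t \<and> t \<le> c}"

definition UW :: "nat \<Rightarrow> nat \<Rightarrow> (uw_gen word set) monoid" where
  "UW n c = presented_group (uw_gens n c) (uv_rels n c \<union> welded_rels n c)"

definition abelianization :: "('a, 'b) monoid_scheme \<Rightarrow> 'a set monoid" where
  "abelianization G = G Mod (derived G (carrier G))"

end

(* Exponent sums give a homomorphism from UW_n(c) onto Z^c x Z/2: for each colour t, the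
   exponent sum of the letters sigma_{i,t}, and the parity of the number of letters rho_i, are
   preserved by every relation, welded ones included.  Conversely, in the abelianization the
   braid relation forces all rho_i to be equal, rho_i rho_{i+1} sigma_{i,t} = sigma_{i+1,t} rho_i rho_{i+1}
   forces sigma_{i,t} = sigma_{1,t}, and rho_1^2 = 1; so t |-> sigma_{1,t}, 1 |-> rho_1 defines a
   homomorphism back, and the quotient map factors through the exponent-sum map.  Hence the kernel
   of the latter is exactly the commutator subgroup. *)

theory Submission
  imports Defs
begin

lemma sum_list_concat: "sum_list (concat xss) = sum_list (map sum_list xss)"
  by (induction xss) simp_all

section \<open>Presented groups\<close>

abbreviation word_class :: "'g set \<Rightarrow> ('g word \<times> 'g word) set \<Rightarrow> 'g word \<Rightarrow> 'g word set" where
  "word_class S R w \<equiv> {w'. pres_eq S R w w'}"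

lemma valid_word_append [simp]: "valid_word S (u @ v) \<longleftrightarrow> valid_word S u \<and> valid_word S v"
  by (auto simp: valid_word_def)

lemma valid_word_Cons [simp]: "valid_word S (x # w) \<longleftrightarrow> fst x \<in> S \<and> valid_word S w"
  by (auto simp: valid_word_def)

lemma valid_word_Nil [simp]: "valid_word S []"
  by (simp add: valid_word_def)

lemma pres_eq_valid_word: "pres_eq S R w w' \<Longrightarrow> valid_word S w \<and> valid_word S w'"
  by (induction rule: pres_eq.induct) auto

lemma pres_eq_append_right: "pres_eq S R w w' \<Longrightarrow> valid_word S v \<Longrightarrow> pres_eq S R (w @ v) (w' @ v)"
proof (induction rule: pres_eq.induct)
  case (cancel u v' g b)
  then show ?case using pres_eq.cancel[of S u "v' @ v" g R b] by simp
next
  case (rel l r u v')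
  then show ?case using pres_eq.rel[of l r R S u "v' @ v"] by simp
qed (auto intro: pres_eq.intros)

lemma pres_eq_append_left: "pres_eq S R w w' \<Longrightarrow> valid_word S u \<Longrightarrow> pres_eq S R (u @ w) (u @ w')"
proof (induction rule: pres_eq.induct)
  case (cancel u' v g b)
  then show ?case using pres_eq.cancel[of S "u @ u'" v g R b] by simp
next
  case (rel l r u' v)
  then show ?case using pres_eq.rel[of l r R S "u @ u'" v] by simp
qed (auto intro: pres_eq.intros)

lemma pres_eq_append: "pres_eq S R u u' \<Longrightarrow> pres_eq S R v v' \<Longrightarrow> pres_eq S R (u @ v) (u' @ v')"
  by (meson pres_eq.trans pres_eq_append_left pres_eq_append_right pres_eq_valid_word)

lemma word_class_eq: "pres_eq S R w w' \<Longrightarrow> word_class S R w = word_class S R w'"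
  by (auto intro: pres_eq.trans pres_eq.sym)

lemma carrier_presented_group: "carrier (presented_group S R) = {word_class S R w | w. valid_word S w}"
  by (simp add: presented_group_def)

lemma one_presented_group: "\<one>\<^bsub>presented_group S R\<^esub> = word_class S R []"
  by (simp add: presented_group_def)

lemma mult_presented_group:
  assumes "valid_word S u" "valid_word S v"
  shows "word_class S R u \<otimes>\<^bsub>presented_group S R\<^esub> word_class S R v = word_class S R (u @ v)"
  using assms by (auto simp: presented_group_def intro: pres_eq.refl)
    (meson pres_eq.sym pres_eq.trans pres_eq_append)

lemma word_class_in_carrier: "valid_word S w \<Longrightarrow> word_class S R w \<in> carrier (presented_group S R)"
  by (auto simp: carrier_presented_group)

definition inverse_word :: "'g word \<Rightarrow> 'g word" where
  "inverse_word w = rev (map (\<lambda>(g, b). (g, \<not> b)) w)"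

lemma valid_inverse_word [simp]: "valid_word S (inverse_word w) \<longleftrightarrow> valid_word S w"
  unfolding valid_word_def inverse_word_def by (force simp: image_iff)

lemma pres_eq_inverse_word_append: "valid_word S w \<Longrightarrow> pres_eq S R (inverse_word w @ w) []"
proof (induction w)
  case Nil
  then show ?case by (simp add: inverse_word_def pres_eq.refl)
next
  case (Cons x w)
  obtain g b where x: "x = (g, b)" by fastforce
  have "pres_eq S R (inverse_word w @ [(g, \<not> b), (g, \<not> \<not> b)] @ w) (inverse_word w @ w)"
    using Cons.prems x by (intro pres_eq.cancel) auto
  then show ?case
    using Cons x by (auto simp: inverse_word_def intro: pres_eq.trans)
qed

lemma group_presented_group: "group (presented_group S R)"
proof (rule groupI)
  show "\<one>\<^bsub>presented_group S R\<^esub> \<in> carrier (presented_group S R)"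
    by (simp add: one_presented_group word_class_in_carrier)
next
  fix x y z
  assume "x \<in> carrier (presented_group S R)" "y \<in> carrier (presented_group S R)"
    "z \<in> carrier (presented_group S R)"
  then obtain u v w where uvw: "valid_word S u" "valid_word S v" "valid_word S w"
    and xyz: "x = word_class S R u" "y = word_class S R v" "z = word_class S R w"
    by (auto simp: carrier_presented_group)
  show "x \<otimes>\<^bsub>presented_group S R\<^esub> y \<in> carrier (presented_group S R)"
    using uvw by (simp add: xyz mult_presented_group word_class_in_carrier)
  show "x \<otimes>\<^bsub>presented_group S R\<^esub> y \<otimes>\<^bsub>presented_group S R\<^esub> z =
      x \<otimes>\<^bsub>presented_group S R\<^esub> (y \<otimes>\<^bsub>presented_group S R\<^esub> z)"
    using uvw by (simp add: xyz mult_presented_group)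
next
  fix x
  assume "x \<in> carrier (presented_group S R)"
  then obtain w where w: "valid_word S w" "x = word_class S R w"
    by (auto simp: carrier_presented_group)
  then show "\<one>\<^bsub>presented_group S R\<^esub> \<otimes>\<^bsub>presented_group S R\<^esub> x = x"
    by (simp add: one_presented_group mult_presented_group)
  have "word_class S R (inverse_word w) \<otimes>\<^bsub>presented_group S R\<^esub> x = \<one>\<^bsub>presented_group S R\<^esub>"
    using w word_class_eq[OF pres_eq_inverse_word_append[of S w R]]
    by (simp add: one_presented_group mult_presented_group)
  moreover have "word_class S R (inverse_word w) \<in> carrier (presented_group S R)"
    using w by (simp add: word_class_in_carrier)
  ultimately show "\<exists>y\<in>carrier (presented_group S R). y \<otimes>\<^bsub>presented_group S R\<^esub> x = \<one>\<^bsub>presented_group S R\<^esub>"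
    by (rule bexI)
qed

lemma word_class_relation:
  "(l, r) \<in> R \<Longrightarrow> valid_word S l \<Longrightarrow> valid_word S r \<Longrightarrow> word_class S R l = word_class S R r"
  using word_class_eq[OF pres_eq.rel[of l r R S "[]" "[]"]] by simp

lemma word_class_Cons:
  "fst x \<in> S \<Longrightarrow> valid_word S w \<Longrightarrow>
   word_class S R (x # w) = word_class S R [x] \<otimes>\<^bsub>presented_group S R\<^esub> word_class S R w"
  using mult_presented_group[of S "[x]" w R] by simp

lemma inv_word_class_letter:
  assumes "g \<in> S"
  shows "inv\<^bsub>presented_group S R\<^esub> word_class S R [(g, False)] = word_class S R [(g, True)]"
proof -
  interpret group "presented_group S R" by (rule group_presented_group)
  have "pres_eq S R [(g, True), (g, False)] []"
    using pres_eq.cancel[of S "[]" "[]" g R True] assms by simp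
  then have "word_class S R [(g, True), (g, False)] = word_class S R []"
    by (rule word_class_eq)
  then have "word_class S R [(g, True)] \<otimes>\<^bsub>presented_group S R\<^esub> word_class S R [(g, False)]
      = \<one>\<^bsub>presented_group S R\<^esub>"
    using assms mult_presented_group[of S "[(g, True)]" "[(g, False)]" R]
    by (simp add: one_presented_group)
  then show ?thesis
    using assms by (intro inv_equality) (auto intro: word_class_in_carrier)
qed

lemma hom_word_class_foldr:
  assumes "group H" "h \<in> hom (presented_group S R) H" "valid_word S w"
  shows "h (word_class S R w) = foldr (\<lambda>x y. h (word_class S R [x]) \<otimes>\<^bsub>H\<^esub> y) w \<one>\<^bsub>H\<^esub>"
proof -
  interpret group_hom "presented_group S R" H h
    using assms(1,2) group_presented_group by (simp add: group_hom_def group_hom_axioms_def)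
  show ?thesis
    using assms(3)
  proof (induction w)
    case Nil
    show ?case by (simp only: one_presented_group[symmetric] hom_one foldr_Nil id_apply)
  next
    case (Cons a w)
    then have "word_class S R [a] \<in> carrier (presented_group S R)"
      and "word_class S R w \<in> carrier (presented_group S R)"
      by (simp_all add: word_class_in_carrier)
    with Cons show ?case
      by (simp only: word_class_Cons[of a S w R] valid_word_Cons hom_mult foldr_Cons o_apply)
  qed
qed

lemma presented_group_hom_eqI:
  assumes "group H" "h \<in> hom (presented_group S R) H" "h' \<in> hom (presented_group S R) H"
    and letters: "\<And>g. g \<in> S \<Longrightarrow> h (word_class S R [(g, False)]) = h' (word_class S R [(g, False)])"
    and "x \<in> carrier (presented_group S R)"
  shows "h x = h' x"
proof -
  interpret h: group_hom "presented_group S R" H h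
    using assms(1,2) group_presented_group by (simp add: group_hom_def group_hom_axioms_def)
  interpret h': group_hom "presented_group S R" H h'
    using assms(1,3) group_presented_group by (simp add: group_hom_def group_hom_axioms_def)
  have letter: "h (word_class S R [(g, b)]) = h' (word_class S R [(g, b)])" if "g \<in> S" for g b
  proof (cases b)
    case True
    have "word_class S R [(g, False)] \<in> carrier (presented_group S R)"
      using that by (simp add: word_class_in_carrier)
    then have "h (inv\<^bsub>presented_group S R\<^esub> word_class S R [(g, False)])
        = h' (inv\<^bsub>presented_group S R\<^esub> word_class S R [(g, False)])"
      by (simp only: h.hom_inv h'.hom_inv letters[OF that])
    then show ?thesis
      using True by (simp only: inv_word_class_letter[OF that])
  qed (use letters that in simp)
  obtain w where w: "valid_word S w" "x = word_class S R w"
    using assms(5) by (auto simp: carrier_presented_group)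
  have "foldr (\<lambda>x y. h (word_class S R [x]) \<otimes>\<^bsub>H\<^esub> y) w \<one>\<^bsub>H\<^esub>
      = foldr (\<lambda>x y. h' (word_class S R [x]) \<otimes>\<^bsub>H\<^esub> y) w \<one>\<^bsub>H\<^esub>"
    using w(1) letter by (intro foldr_cong) (auto simp: valid_word_def)
  then show ?thesis
    by (simp only: w(2) hom_word_class_foldr[OF assms(1,2) w(1)] hom_word_class_foldr[OF assms(1,3) w(1)])
qed

definition word_map_lift :: "('g word \<Rightarrow> 'a) \<Rightarrow> 'g word set \<Rightarrow> 'a" where
  "word_map_lift f M = f (SOME w. w \<in> M)"

text \<open>Von Dyck's theorem, for maps given on words.\<close>

locale compatible_word_map =
  fixes S :: "'g set" and R :: "('g word \<times> 'g word) set"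
    and H :: "('a, 'b) monoid_scheme" and f :: "'g word \<Rightarrow> 'a"
  assumes closed: "valid_word S w \<Longrightarrow> f w \<in> carrier H"
    and mult: "valid_word S u \<Longrightarrow> valid_word S v \<Longrightarrow> f (u @ v) = f u \<otimes>\<^bsub>H\<^esub> f v"
    and cancel_pair: "g \<in> S \<Longrightarrow> f [(g, b), (g, \<not> b)] = f []"
    and relation: "(l, r) \<in> R \<Longrightarrow> valid_word S l \<Longrightarrow> valid_word S r \<Longrightarrow> f l = f r"
begin

lemma pres_eq_imp_eq: "pres_eq S R w w' \<Longrightarrow> f w = f w'"
proof (induction rule: pres_eq.induct)
  case (cancel u v g b)
  then have "f (u @ [(g, b), (g, \<not> b)] @ v) = f u \<otimes>\<^bsub>H\<^esub> (f [(g, b), (g, \<not> b)] \<otimes>\<^bsub>H\<^esub> f v)"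
    by (simp add: mult del: append_Cons)
  also have "\<dots> = f u \<otimes>\<^bsub>H\<^esub> (f [] \<otimes>\<^bsub>H\<^esub> f v)"
    using cancel by (simp add: cancel_pair)
  also have "\<dots> = f (u @ v)"
    using cancel by (metis mult append_Nil valid_word_Nil)
  finally show ?case .
next
  case (rel l r u v)
  then have "f l = f r" by (intro relation)
  with rel show ?case by (simp add: mult del: append_Cons)
qed simp_all

lemma word_map_lift_word_class:
  assumes "valid_word S w"
  shows "word_map_lift f (word_class S R w) = f w"
proof -
  have "w \<in> word_class S R w"
    using assms by (simp add: pres_eq.refl)
  moreover have "f w' = f w" if "w' \<in> word_class S R w" for w'
    using that pres_eq_imp_eq by (metis mem_Collect_eq)
  ultimately show ?thesis
    unfolding word_map_lift_def by (rule someI2)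
qed

lemma word_map_lift_hom: "word_map_lift f \<in> hom (presented_group S R) H"
proof (rule homI)
  fix x y
  assume "x \<in> carrier (presented_group S R)" "y \<in> carrier (presented_group S R)"
  then obtain u v where "valid_word S u" "x = word_class S R u" "valid_word S v" "y = word_class S R v"
    by (auto simp: carrier_presented_group)
  then show "word_map_lift f x \<in> carrier H"
    and "word_map_lift f (x \<otimes>\<^bsub>presented_group S R\<^esub> y) = word_map_lift f x \<otimes>\<^bsub>H\<^esub> word_map_lift f y"
    by (simp_all add: mult_presented_group word_map_lift_word_class closed mult)
qed

end

section \<open>Abelianizations\<close>

definition abelianization_map :: "('a, 'b) monoid_scheme \<Rightarrow> 'a \<Rightarrow> 'a set" where
  "abelianization_map G x = derived G (carrier G) #>\<^bsub>G\<^esub> x"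

lemma (in group) abelianization_map_hom: "abelianization_map G \<in> hom G (abelianization G)"
  unfolding abelianization_map_def abelianization_def
  by (rule normal.r_coset_hom_Mod[OF derived_self_is_normal])

lemma (in group) comm_group_abelianization: "comm_group (abelianization G)"
  unfolding abelianization_def by (rule derived_quot_is_comm_group)

lemma (in group_hom) abelianization_iso:
  assumes "comm_group H" and surj: "h ` carrier G = carrier H"
    and "\<psi> \<in> hom H (abelianization G)"
    and factor: "\<And>x. x \<in> carrier G \<Longrightarrow> \<psi> (h x) = abelianization_map G x"
  shows "abelianization G \<cong> H"
proof -
  let ?D = "derived G (carrier G)"
  have "h ` ?D = derived H (carrier H)"
    using derived_img[of "carrier G"] surj by simp
  also have "\<dots> = {\<one>\<^bsub>H\<^esub>}"
    by (simp add: comm_group.derived_eq_singleton[OF assms(1)])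
  finally have "?D \<subseteq> kernel G H h"
    using G.derived_in_carrier[of "carrier G"] by (auto simp: kernel_def)
  moreover have "kernel G H h \<subseteq> ?D"
  proof
    fix x
    assume "x \<in> kernel G H h"
    then have x: "x \<in> carrier G" and "h x = \<one>\<^bsub>H\<^esub>"
      by (auto simp: kernel_def)
    interpret \<psi>: group_hom H "abelianization G" \<psi>
      using assms(1,3) G.comm_group_abelianization
      by (simp add: group_hom_def group_hom_axioms_def comm_group_def)
    have "?D #>\<^bsub>G\<^esub> x = ?D"
      using factor[OF x] \<psi>.hom_one \<open>h x = \<one>\<^bsub>H\<^esub>\<close>
      by (simp add: abelianization_map_def abelianization_def)
    moreover have "x \<in> ?D #>\<^bsub>G\<^esub> x"
      using G.rcos_self[OF x] G.derived_is_subgroup[of "carrier G"] by simp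
    ultimately show "x \<in> ?D" by simp
  qed
  ultimately have "kernel G H h = ?D" by blast
  then show ?thesis
    using FactGroup_iso[OF surj] by (simp add: abelianization_def)
qed

lemma (in comm_group) braid_relation_imp_eq:
  assumes "a \<in> carrier G" "b \<in> carrier G" "a \<otimes> (b \<otimes> a) = b \<otimes> (a \<otimes> b)"
  shows "a = b"
proof -
  have "a \<otimes> (a \<otimes> b) = b \<otimes> (a \<otimes> b)"
    using assms by (simp add: m_comm[of b a])
  then show ?thesis
    using assms by simp
qed

lemma (in comm_group) twisted_commutation_imp_eq:
  assumes "a \<in> carrier G" "b \<in> carrier G" "s \<in> carrier G" "s' \<in> carrier G"
    and "a \<otimes> (b \<otimes> s) = s' \<otimes> (a \<otimes> b)"
  shows "s = s'"
proof -
  have "s \<otimes> (a \<otimes> b) = a \<otimes> (b \<otimes> s)"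
    using assms by (simp add: m_comm[of s] m_assoc)
  then have "s \<otimes> (a \<otimes> b) = s' \<otimes> (a \<otimes> b)"
    using assms(5) by simp
  then show ?thesis
    using assms by simp
qed

section \<open>The group \<open>\<int>\<^sup>I \<times> \<int>/2\<close> and its homomorphisms\<close>

abbreviation int_vec_mod2 :: "'i set \<Rightarrow> (('i \<Rightarrow> int) \<times> int) monoid" where
  "int_vec_mod2 I \<equiv> DirProd (product_group I (\<lambda>_. integer_group)) (integer_mod_group 2)"

lemma carrier_int_vec_mod2: "carrier (int_vec_mod2 I) = (\<Pi>\<^sub>E i\<in>I. UNIV) \<times> {0..<2}"
  by (simp add: carrier_integer_mod_group)

lemma comm_group_int_vec_mod2: "comm_group (int_vec_mod2 I)"
proof (rule group.group_comm_groupI)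
  show "group (int_vec_mod2 I)"
    by (intro DirProd_group product_group group_integer_group group_integer_mod_group)
qed (auto simp: add.commute)

lemma (in group) int_pow_mod_2:
  assumes "r \<in> carrier G" "r \<otimes> r = \<one>"
  shows "r [^] (k mod 2) = r [^] (k :: int)"
proof -
  have "r [^] (2 :: nat) = \<one>"
    using assms by (simp add: numeral_2_eq_2)
  then have "ord r dvd 2"
    using pow_eq_id[OF assms(1)] by simp
  then have "int (ord r) dvd k - k mod 2"
    by (metis dvd_trans int_dvd_int_iff minus_mod_eq_mult_div dvd_triv_left of_nat_numeral)
  then show ?thesis
    using int_pow_eq[OF assms(1)] by simp
qed

definition power_product :: "('a, 'b) monoid_scheme \<Rightarrow> 'i set \<Rightarrow> ('i \<Rightarrow> 'a) \<Rightarrow> 'a \<Rightarrow> ('i \<Rightarrow> int) \<times> int \<Rightarrow> 'a" where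
  "power_product G I s r x = finprod G (\<lambda>i. s i [^]\<^bsub>G\<^esub> fst x i) I \<otimes>\<^bsub>G\<^esub> r [^]\<^bsub>G\<^esub> snd x"

lemma (in comm_group) power_product_hom:
  fixes I :: "'i set"
  assumes s: "s \<in> I \<rightarrow> carrier G" and r: "r \<in> carrier G" "r \<otimes> r = \<one>"
  shows "power_product G I s r \<in> hom (int_vec_mod2 I) G"
proof (rule homI)
  have powers: "(\<lambda>i. s i [^] f i) \<in> I \<rightarrow> carrier G" for f :: "'i \<Rightarrow> int"
    using s by auto
  show "power_product G I s r x \<in> carrier G" for x
    unfolding power_product_def using powers r by simp
  fix x y :: "('i \<Rightarrow> int) \<times> int"
  let ?P = "\<lambda>f. finprod G (\<lambda>i. s i [^] f i) I"
  have "?P (\<lambda>i\<in>I. fst x i + fst y i) = finprod G (\<lambda>i. s i [^] fst x i \<otimes> s i [^] fst y i) I"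
    using s by (intro finprod_cong') (auto simp: int_pow_mult Pi_iff)
  also have "\<dots> = ?P (fst x) \<otimes> ?P (fst y)"
    using powers by simp
  finally have "?P (\<lambda>i\<in>I. fst x i + fst y i) = ?P (fst x) \<otimes> ?P (fst y)" .
  moreover have "r [^] ((snd x + snd y) mod 2) = r [^] snd x \<otimes> r [^] snd y"
    using r by (simp add: int_pow_mod_2 int_pow_mult)
  ultimately show "power_product G I s r (x \<otimes>\<^bsub>int_vec_mod2 I\<^esub> y)
      = power_product G I s r x \<otimes> power_product G I s r y"
    using powers r by (simp add: power_product_def mult_DirProd' m_ac)
qed

lemma (in comm_group) power_product_unit_vector:
  assumes "finite I" "j \<in> I" "s \<in> I \<rightarrow> carrier G"
  shows "power_product G I s r ((\<lambda>i\<in>I. if i = j then 1 else 0), 0) = s j"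
proof -
  have "finprod G (\<lambda>i. s i [^] (\<lambda>i\<in>I. if i = j then 1 else 0 :: int) i) I
      = finprod G (\<lambda>i. if i = j then s i else \<one>) I"
    using assms(3) by (intro finprod_cong') (auto simp: Pi_iff)
  also have "\<dots> = s j"
    using finprod_singleton_swap[OF assms(2,1,3)] .
  finally show ?thesis
    using assms by (simp add: power_product_def Pi_iff)
qed

lemma (in comm_group) power_product_parity:
  assumes "r \<in> carrier G"
  shows "power_product G I s r ((\<lambda>i\<in>I. 0), 1) = r"
proof -
  have "finprod G (\<lambda>i. s i [^] (\<lambda>i\<in>I. 0 :: int) i) I = \<one>"
    by (rule finprod_one_eqI) simp
  then show ?thesis
    using assms by (simp add: power_product_def)
qed

section \<open>The abelianization of \<open>UW\<^sub>n(c)\<close>\<close>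

abbreviation uw_rels :: "nat \<Rightarrow> nat \<Rightarrow> (uw_gen word \<times> uw_gen word) set" where
  "uw_rels n c \<equiv> uv_rels n c \<union> welded_rels n c"

abbreviation uw_class :: "nat \<Rightarrow> nat \<Rightarrow> uw_gen word \<Rightarrow> uw_gen word set" where
  "uw_class n c w \<equiv> word_class (uw_gens n c) (uw_rels n c) w"

lemma Rho_in_uw_gens [simp]: "Rho i \<in> uw_gens n c \<longleftrightarrow> 1 \<le> i \<and> i \<le> n - 1"
  by (auto simp: uw_gens_def)

lemma Sigma_in_uw_gens [simp]:
  "Sigma i t \<in> uw_gens n c \<longleftrightarrow> 1 \<le> i \<and> i \<le> n - 1 \<and> 1 \<le> t \<and> t \<le> c"
  by (auto simp: uw_gens_def)

lemma group_UW: "group (UW n c)"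
  unfolding UW_def by (rule group_presented_group)

fun sigma_exp :: "nat \<Rightarrow> uw_gen \<times> bool \<Rightarrow> int" where
  "sigma_exp t (Sigma i s, b) = (if t = s then (if b then -1 else 1) else 0)"
| "sigma_exp t (Rho i, b) = 0"

fun rho_exp :: "uw_gen \<times> bool \<Rightarrow> int" where
  "rho_exp (Rho i, b) = 1"
| "rho_exp (Sigma i s, b) = 0"

definition exponent_map :: "nat \<Rightarrow> uw_gen word \<Rightarrow> (nat \<Rightarrow> int) \<times> int" where
  "exponent_map c w = ((\<lambda>t\<in>{1..c}. sum_list (map (sigma_exp t) w)), sum_list (map rho_exp w) mod 2)"

lemma compatible_word_map_exponent_map:
  "compatible_word_map (uw_gens n c) (uw_rels n c) (int_vec_mod2 {1..c}) (exponent_map c)"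
proof
  fix u v :: "uw_gen word"
  show "exponent_map c (u @ v) = exponent_map c u \<otimes>\<^bsub>int_vec_mod2 {1..c}\<^esub> exponent_map c v"
    by (auto simp: exponent_map_def mod_add_eq intro!: restrict_ext)
next
  fix g b
  show "exponent_map c [(g, b), (g, \<not> b)] = exponent_map c []"
    by (cases g) (auto simp: exponent_map_def)
next
  fix l r
  assume "(l, r) \<in> uw_rels n c"
  then show "exponent_map c l = exponent_map c r"
    unfolding uv_rels_def welded_rels_def
    by (elim UnE CollectE exE conjE) (simp_all add: rh_def sg_def exponent_map_def add.commute)
qed (simp add: exponent_map_def carrier_integer_mod_group)

abbreviation exponent_hom :: "nat \<Rightarrow> uw_gen word set \<Rightarrow> (nat \<Rightarrow> int) \<times> int" where
  "exponent_hom c \<equiv> word_map_lift (exponent_map c)"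

lemma exponent_hom_hom: "exponent_hom c \<in> hom (UW n c) (int_vec_mod2 {1..c})"
  unfolding UW_def
  by (rule compatible_word_map.word_map_lift_hom[OF compatible_word_map_exponent_map])

lemma exponent_hom_word_class: "valid_word (uw_gens n c) w \<Longrightarrow> exponent_hom c (uw_class n c w) = exponent_map c w"
  by (rule compatible_word_map.word_map_lift_word_class[OF compatible_word_map_exponent_map])

definition exponent_word :: "nat \<Rightarrow> (nat \<Rightarrow> int) \<Rightarrow> int \<Rightarrow> uw_gen word" where
  "exponent_word c f e =
     concat (map (\<lambda>t. replicate (nat \<bar>f t\<bar>) (Sigma 1 t, f t < 0)) [1..<c + 1])
     @ replicate (nat e) (Rho 1, False)"

lemma valid_exponent_word: "n \<ge> 2 \<Longrightarrow> valid_word (uw_gens n c) (exponent_word c f e)"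
  by (auto simp: valid_word_def exponent_word_def set_replicate_conv_if split: if_splits)

lemma exponent_map_exponent_word:
  assumes "f \<in> (\<Pi>\<^sub>E t\<in>{1..c}. UNIV)" "e \<in> {0..<2}"
  shows "exponent_map c (exponent_word c f e) = (f, e)"
proof -
  have sigma: "sum_list (map (sigma_exp t) (exponent_word c f e)) = f t" if "t \<in> {1..c}" for t
  proof -
    have "sum_list (map (sigma_exp t) (exponent_word c f e))
        = sum_list (map (\<lambda>s. if t = s then f s else 0) [1..<c + 1])"
      unfolding exponent_word_def map_append sum_list_append map_concat sum_list_concat map_map
      by (auto simp: sum_list_replicate o_def intro!: arg_cong[where f = sum_list])
    also have "\<dots> = f t"
      using that by (simp flip: sum_set_upt_conv_sum_list_nat)
    finally show ?thesis .
  qed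
  have "(\<lambda>t\<in>{1..c}. sum_list (map (sigma_exp t) (exponent_word c f e))) = f"
  proof
    fix t
    show "(\<lambda>t\<in>{1..c}. sum_list (map (sigma_exp t) (exponent_word c f e))) t = f t"
      using sigma[of t] PiE_arb[OF assms(1), of t] by (cases "t \<in> {1..c}") simp_all
  qed
  moreover have "sum_list (map rho_exp (exponent_word c f e)) mod 2 = e"
    using assms(2)
    unfolding exponent_word_def map_append sum_list_append map_concat sum_list_concat map_map
    by (auto simp: sum_list_replicate o_def)
  ultimately show ?thesis
    by (simp add: exponent_map_def)
qed

lemma exponent_hom_surj: "n \<ge> 2 \<Longrightarrow> exponent_hom c ` carrier (UW n c) = carrier (int_vec_mod2 {1..c})"
proof
  show "exponent_hom c ` carrier (UW n c) \<subseteq> carrier (int_vec_mod2 {1..c})"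
    using exponent_hom_hom by (blast intro: hom_in_carrier)
next
  assume "n \<ge> 2"
  show "carrier (int_vec_mod2 {1..c}) \<subseteq> exponent_hom c ` carrier (UW n c)"
  proof
    fix x
    assume "x \<in> carrier (int_vec_mod2 {1..c})"
    then obtain f e where x: "x = (f, e)" and f: "f \<in> (\<Pi>\<^sub>E t\<in>{1..c}. UNIV)" and e: "e \<in> {0..<2}"
      unfolding carrier_int_vec_mod2 by blast
    have w: "valid_word (uw_gens n c) (exponent_word c f e)"
      using \<open>n \<ge> 2\<close> by (rule valid_exponent_word)
    then have "uw_class n c (exponent_word c f e) \<in> carrier (UW n c)"
      unfolding UW_def by (rule word_class_in_carrier)
    moreover have "exponent_hom c (uw_class n c (exponent_word c f e)) = x"
      using w f e x by (simp add: exponent_hom_word_class exponent_map_exponent_word)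
    ultimately show "x \<in> exponent_hom c ` carrier (UW n c)"
      by (simp add: rev_image_eqI)
  qed
qed

abbreviation UW_ab :: "nat \<Rightarrow> nat \<Rightarrow> uw_gen word set set monoid" where
  "UW_ab n c \<equiv> abelianization (UW n c)"

abbreviation rho_bar :: "nat \<Rightarrow> nat \<Rightarrow> nat \<Rightarrow> uw_gen word set set" where
  "rho_bar n c i \<equiv> abelianization_map (UW n c) (uw_class n c [rh i])"

abbreviation sigma_bar :: "nat \<Rightarrow> nat \<Rightarrow> nat \<Rightarrow> nat \<Rightarrow> uw_gen word set set" where
  "sigma_bar n c i t \<equiv> abelianization_map (UW n c) (uw_class n c [sg i t])"

lemma comm_group_UW_ab: "comm_group (UW_ab n c)"
  by (rule group.comm_group_abelianization[OF group_UW])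

lemma abelianization_map_UW_hom:
  "abelianization_map (UW n c) \<in> hom (presented_group (uw_gens n c) (uw_rels n c)) (UW_ab n c)"
  using group.abelianization_map_hom[OF group_UW] by (simp only: UW_def)

lemma abelianization_map_UW_closed:
  "valid_word (uw_gens n c) w \<Longrightarrow> abelianization_map (UW n c) (uw_class n c w) \<in> carrier (UW_ab n c)"
  by (rule hom_in_carrier[OF abelianization_map_UW_hom word_class_in_carrier])

lemma UW_ab_relation:
  assumes "(l, r) \<in> uw_rels n c" "valid_word (uw_gens n c) l" "valid_word (uw_gens n c) r"
  shows "foldr (\<lambda>x y. abelianization_map (UW n c) (uw_class n c [x]) \<otimes>\<^bsub>UW_ab n c\<^esub> y) l
           \<one>\<^bsub>UW_ab n c\<^esub>
       = foldr (\<lambda>x y. abelianization_map (UW n c) (uw_class n c [x]) \<otimes>\<^bsub>UW_ab n c\<^esub> y) r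
           \<one>\<^bsub>UW_ab n c\<^esub>"
proof -
  interpret Ab: comm_group "UW_ab n c"
    by (rule comm_group_UW_ab)
  show ?thesis
    using hom_word_class_foldr[OF Ab.is_group abelianization_map_UW_hom assms(2)]
      hom_word_class_foldr[OF Ab.is_group abelianization_map_UW_hom assms(3)]
      word_class_relation[OF assms]
    by simp
qed

lemma rho_bar_Suc:
  assumes "1 \<le> i" "i \<le> n - 2"
  shows "rho_bar n c (Suc i) = rho_bar n c i"
proof -
  interpret Ab: comm_group "UW_ab n c"
    by (rule comm_group_UW_ab)
  have i: "i \<le> n - 1" "Suc i \<le> n - 1"
    using assms by linarith+
  have "([rh i, rh (Suc i), rh i], [rh (Suc i), rh i, rh (Suc i)]) \<in> uw_rels n c"
    using assms unfolding uv_rels_def by auto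
  from UW_ab_relation[OF this]
  have "rho_bar n c i \<otimes>\<^bsub>UW_ab n c\<^esub> (rho_bar n c (Suc i) \<otimes>\<^bsub>UW_ab n c\<^esub> rho_bar n c i)
      = rho_bar n c (Suc i) \<otimes>\<^bsub>UW_ab n c\<^esub> (rho_bar n c i \<otimes>\<^bsub>UW_ab n c\<^esub> rho_bar n c (Suc i))"
    using assms i by (simp add: rh_def abelianization_map_UW_closed)
  moreover have "rho_bar n c i \<in> carrier (UW_ab n c)"
    and "rho_bar n c (Suc i) \<in> carrier (UW_ab n c)"
    using assms i by (simp_all add: rh_def abelianization_map_UW_closed)
  ultimately show ?thesis
    using Ab.braid_relation_imp_eq by metis
qed

lemma sigma_bar_Suc:
  assumes "1 \<le> i" "i \<le> n - 2" "1 \<le> t" "t \<le> c"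
  shows "sigma_bar n c (Suc i) t = sigma_bar n c i t"
proof -
  interpret Ab: comm_group "UW_ab n c"
    by (rule comm_group_UW_ab)
  have i: "i \<le> n - 1" "Suc i \<le> n - 1"
    using assms by linarith+
  have "([rh i, rh (Suc i), sg i t], [sg (Suc i) t, rh i, rh (Suc i)]) \<in> uw_rels n c"
    using assms unfolding uv_rels_def by auto
  from UW_ab_relation[OF this]
  have "rho_bar n c i \<otimes>\<^bsub>UW_ab n c\<^esub> (rho_bar n c (Suc i) \<otimes>\<^bsub>UW_ab n c\<^esub> sigma_bar n c i t)
      = sigma_bar n c (Suc i) t \<otimes>\<^bsub>UW_ab n c\<^esub> (rho_bar n c i \<otimes>\<^bsub>UW_ab n c\<^esub> rho_bar n c (Suc i))"
    using assms i by (simp add: rh_def sg_def abelianization_map_UW_closed)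
  moreover have "rho_bar n c i \<in> carrier (UW_ab n c)"
    and "rho_bar n c (Suc i) \<in> carrier (UW_ab n c)"
    and "sigma_bar n c i t \<in> carrier (UW_ab n c)"
    and "sigma_bar n c (Suc i) t \<in> carrier (UW_ab n c)"
    using assms i by (simp_all add: rh_def sg_def abelianization_map_UW_closed)
  ultimately show ?thesis
    using Ab.twisted_commutation_imp_eq by metis
qed

lemma rho_bar_eq_rho_bar_1:
  assumes "1 \<le> i" "i \<le> n - 1"
  shows "rho_bar n c i = rho_bar n c 1"
  using assms
proof (induction i rule: nat_induct_at_least)
  case (Suc i)
  then show ?case using rho_bar_Suc[of i n c] by simp
qed simp

lemma sigma_bar_eq_sigma_bar_1:
  assumes "1 \<le> i" "i \<le> n - 1" "1 \<le> t" "t \<le> c"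
  shows "sigma_bar n c i t = sigma_bar n c 1 t"
  using assms
proof (induction i rule: nat_induct_at_least)
  case (Suc i)
  then show ?case using sigma_bar_Suc[of i n t c] by simp
qed simp

lemma rho_bar_involution:
  assumes "n \<ge> 2"
  shows "rho_bar n c 1 \<otimes>\<^bsub>UW_ab n c\<^esub> rho_bar n c 1 = \<one>\<^bsub>UW_ab n c\<^esub>"
proof -
  interpret Ab: comm_group "UW_ab n c"
    by (rule comm_group_UW_ab)
  have "([rh 1, rh 1], []) \<in> uw_rels n c"
    using assms unfolding uv_rels_def by auto
  from UW_ab_relation[OF this]
  show ?thesis
    using assms by (simp add: rh_def abelianization_map_UW_closed)
qed

abbreviation UW_ab_param :: "nat \<Rightarrow> nat \<Rightarrow> (nat \<Rightarrow> int) \<times> int \<Rightarrow> uw_gen word set set" where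
  "UW_ab_param n c \<equiv>
     power_product (UW_ab n c) {1..c} (\<lambda>t. sigma_bar n c 1 t) (rho_bar n c 1)"

lemma UW_ab_param_hom:
  assumes "n \<ge> 2"
  shows "UW_ab_param n c \<in> hom (int_vec_mod2 {1..c}) (UW_ab n c)"
proof -
  interpret Ab: comm_group "UW_ab n c"
    by (rule comm_group_UW_ab)
  show ?thesis
    using assms by (intro Ab.power_product_hom rho_bar_involution)
      (auto simp: rh_def sg_def abelianization_map_UW_closed)
qed

lemma UW_ab_param_exponent_hom:
  assumes "n \<ge> 2" "x \<in> carrier (UW n c)"
  shows "UW_ab_param n c (exponent_hom c x) = abelianization_map (UW n c) x"
proof -
  interpret Ab: comm_group "UW_ab n c"
    by (rule comm_group_UW_ab)
  have letters: "(UW_ab_param n c \<circ> exponent_hom c) (uw_class n c [(g, False)])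
      = abelianization_map (UW n c) (uw_class n c [(g, False)])" if "g \<in> uw_gens n c" for g
  proof (cases g)
    case (Rho i)
    with that have "exponent_hom c (uw_class n c [(g, False)]) = ((\<lambda>t\<in>{1..c}. 0), 1)"
      by (simp add: exponent_hom_word_class exponent_map_def)
    then show ?thesis
      using Rho that rho_bar_eq_rho_bar_1[of i n c] assms(1)
      by (simp add: Ab.power_product_parity rh_def abelianization_map_UW_closed)
  next
    case (Sigma i t)
    with that have "exponent_hom c (uw_class n c [(g, False)]) = ((\<lambda>s\<in>{1..c}. if s = t then 1 else 0), 0)"
      by (simp add: exponent_hom_word_class exponent_map_def)
    then show ?thesis
      using Sigma that sigma_bar_eq_sigma_bar_1[of i n t c] assms(1)
      by (simp add: Ab.power_product_unit_vector sg_def abelianization_map_UW_closed)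
  qed
  have "(UW_ab_param n c \<circ> exponent_hom c) x = abelianization_map (UW n c) x"
    using presented_group_hom_eqI[of _ _ "uw_gens n c" "uw_rels n c", folded UW_def,
        OF Ab.is_group hom_compose[OF exponent_hom_hom UW_ab_param_hom[OF assms(1)]]
        group.abelianization_map_hom[OF group_UW] letters assms(2)] .
  then show ?thesis
    by simp
qed

theorem proposition5p7:
  fixes n c :: nat
  assumes "n \<ge> 2" and "c \<ge> 1"
  shows "abelianization (UW n c) \<cong>
           DirProd (product_group {1..c} (\<lambda>_. integer_group)) (integer_mod_group 2)"
proof -
  interpret exponent_hom: group_hom "UW n c" "int_vec_mod2 {1..c}" "exponent_hom c"
    using group_UW comm_group.axioms(2)[OF comm_group_int_vec_mod2] exponent_hom_hom
    by (simp add: group_hom_def group_hom_axioms_def)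
  show ?thesis
    using exponent_hom.abelianization_iso[OF comm_group_int_vec_mod2 exponent_hom_surj[OF assms(1)]
        UW_ab_param_hom[OF assms(1)] UW_ab_param_exponent_hom[OF assms(1)]] .
qed

end
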